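(* Let $(X,d)$ be an ultrametric space, i.e. $d(x,y)\le\max(d(x,z),d(y,z))$ for all $x,y,z\in X$. Then every slowly oscillating function $f:X\to\mathbb R$ is glacially oscillating.
   Context: A function $g:X\to\mathbb R$ on a metric space is slowly oscillating if for all $r,\epsilon>0$ there is a bounded $K\subset X$ such that $x,y\in X\setminus K$ and $d(x,y)<r$ imply $|g(x)-g(y)|<\epsilon$. A glacial scale on a metric space $X$ is a sequence $\mathcal S=\{(K_i,n_i)\}_{i\ge1}$ of pairs, each $K_i$ a bounded subset of $X$ and $n_i$ a natural number, such that for every bounded $K\subset X$ and every $r>0$ there is $i$ with $K\subset K_i$ and $n_i>r$. An $\mathcal S$-chain is a finite sequence $x_1,\dots,x_n$ of points of $X$ such that for each $i\le n-1$ there is $m\ge1$ with $x_i,x_{i+1}\notin K_m$ and $d(x_i,x_{i+1})\le n_m$. A function $f:X\to\mathbb R$ is glacially oscillating if for every $\epsilon>0$ there is a glacial scale $\mathcal S$ such that $|f(x_1)-f(x_n)|<\epsilon$ for every $\mathcal S$-chain $x_1,\dots,x_n$. *)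

theory Defs
  imports "HOL-Analysis.Analysis"
begin

definition slowly_oscillating :: "('a::metric_space \<Rightarrow> real) \<Rightarrow> bool" where
  "slowly_oscillating g \<longleftrightarrow>
    (\<forall>r>0. \<forall>\<epsilon>>0. \<exists>K. bounded K \<and>
       (\<forall>x y. x \<notin> K \<longrightarrow> y \<notin> K \<longrightarrow> dist x y < r \<longrightarrow> \<bar>g x - g y\<bar> < \<epsilon>))"

text \<open>A glacial scale, indexed by the naturals (index 0 plays the role of 1 in the paper).\<close>
definition glacial_scale :: "(nat \<Rightarrow> 'a::metric_space set \<times> nat) \<Rightarrow> bool" where
  "glacial_scale S \<longleftrightarrow>
    (\<forall>i. bounded (fst (S i))) \<and>
    (\<forall>K r. bounded K \<longrightarrow> r > 0 \<longrightarrow> (\<exists>i. K \<subseteq> fst (S i) \<and> real (snd (S i)) > r))"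

definition S_chain :: "(nat \<Rightarrow> 'a::metric_space set \<times> nat) \<Rightarrow> 'a list \<Rightarrow> bool" where
  "S_chain S xs \<longleftrightarrow> xs \<noteq> [] \<and>
    (\<forall>i. Suc i < length xs \<longrightarrow>
       (\<exists>m. xs ! i \<notin> fst (S m) \<and> xs ! Suc i \<notin> fst (S m) \<and>
            dist (xs ! i) (xs ! Suc i) \<le> real (snd (S m))))"

definition glacially_oscillating :: "('a::metric_space \<Rightarrow> real) \<Rightarrow> bool" where
  "glacially_oscillating f \<longleftrightarrow>
    (\<forall>\<epsilon>>0. \<exists>S. glacial_scale S \<and>
       (\<forall>xs. S_chain S xs \<longrightarrow> \<bar>f (hd xs) - f (last xs)\<bar> < \<epsilon>))"

end

theory Submission
  imports Defs
begin

text \<open>Fix a base point p. For each n, slow oscillation gives a radius B n beyond which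
  points at distance < n + 1 have f-values closer than \<epsilon>; take the scale
  (cball p (max n (B n)), n). In an ultrametric space every triangle is isosceles, so a
  step of length \<le> n between two points outside cball p n never changes the distance to p,
  and the distance between the ends of a chain is at most its longest step. Hence, for some m,
  the two ends of an S-chain are both farther than B m from p and at distance \<le> m from
  each other.\<close>

lemma ultrametric_dist_eq_if_dist_less:
  fixes p x y :: "'a::metric_space"
  assumes ultra: "\<And>x y z::'a. dist x y \<le> max (dist x z) (dist y z)"
    and "dist x y < dist p x"
  shows "dist p y = dist p x"
proof -
  have "dist p y \<le> max (dist p x) (dist y x)" "dist p x \<le> max (dist p y) (dist x y)"
    by (rule ultra)+
  then show ?thesis
    using assms(2) by (auto simp: dist_commute max_def split: if_splits)
qed

lemma slowly_oscillating_outside_ball: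
  fixes f :: "'a::metric_space \<Rightarrow> real"
  assumes "slowly_oscillating f" "r > 0" "\<epsilon> > 0"
  shows "\<exists>B. \<forall>x y. dist p x > B \<longrightarrow> dist p y > B \<longrightarrow> dist x y < r \<longrightarrow> \<bar>f x - f y\<bar> < \<epsilon>"
proof -
  obtain K where "bounded K"
    and K: "\<forall>x y. x \<notin> K \<longrightarrow> y \<notin> K \<longrightarrow> dist x y < r \<longrightarrow> \<bar>f x - f y\<bar> < \<epsilon>"
    using assms(1)[unfolded slowly_oscillating_def, rule_format, OF assms(2,3)] by (elim exE conjE)
  then obtain B where "\<forall>y\<in>K. dist p y \<le> B"
    using bounded_any_center by blast
  then have "x \<notin> K" if "dist p x > B" for x
    using that by force
  with K show ?thesis
    by meson
qed

lemma glacial_scale_cball: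
  fixes p :: "'a::metric_space"
  assumes "\<And>n. real n \<le> R n"
  shows "glacial_scale (\<lambda>n. (cball p (R n), n))"
  unfolding glacial_scale_def
proof (intro conjI allI impI)
  fix K :: "'a set" and r :: real
  assume "bounded K"
  then obtain C where C: "\<forall>y\<in>K. dist p y \<le> C"
    using bounded_any_center by blast
  obtain n :: nat where n: "real n > max r C"
    using reals_Archimedean2 by blast
  then have "K \<subseteq> cball p (R n)"
    using C assms[of n] by force
  with n show "\<exists>n. K \<subseteq> fst (cball p (R n), n) \<and> real (snd (cball p (R n), n)) > r"
    by auto
qed simp

lemma S_chain_Cons_Cons:
  "S_chain S (x # y # ys) \<longleftrightarrow>
    (\<exists>m. x \<notin> fst (S m) \<and> y \<notin> fst (S m) \<and> dist x y \<le> real (snd (S m))) \<and> S_chain S (y # ys)"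
  unfolding S_chain_def
  by (auto simp: less_Suc_eq_0_disj) (metis Suc_less_eq length_Cons nth_Cons_Suc)

lemma ultrametric_S_chain_cball_ends:
  fixes p :: "'a::metric_space"
  assumes ultra: "\<And>x y z::'a. dist x y \<le> max (dist x z) (dist y z)"
    and R: "\<And>n. real n \<le> R n"
    and "S_chain (\<lambda>n. (cball p (R n), n)) xs" "tl xs \<noteq> []"
  shows "\<exists>m. dist (hd xs) (last xs) \<le> real m \<and> R m < dist p (hd xs) \<and> dist p (last xs) = dist p (hd xs)"
  using assms(3,4)
proof (induction xs rule: induct_list012)
  case (3 x y ys)
  then obtain k where k: "R k < dist p x" "dist x y \<le> real k"
    and chain: "S_chain (\<lambda>n. (cball p (R n), n)) (y # ys)"
    by (auto simp: S_chain_Cons_Cons not_le)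
  have "dist x y < dist p x"
    using k R[of k] by linarith
  then have y: "dist p y = dist p x"
    by (rule ultrametric_dist_eq_if_dist_less[OF ultra])
  show ?case
  proof (cases ys)
    case Nil
    with k y show ?thesis by auto
  next
    case (Cons z zs)
    then obtain m where m: "dist y (last (y # ys)) \<le> real m" "R m < dist p y"
      and last: "dist p (last (y # ys)) = dist p y"
      using 3(2) chain by auto
    have "dist x (last (y # ys)) \<le> max (dist x y) (dist (last (y # ys)) y)"
      by (rule ultra)
    then have "dist x (last (y # ys)) \<le> real (max k m)"
      using k m by (auto simp: dist_commute)
    moreover have "R (max k m) < dist p x"
      using k m y by (simp add: max_def)
    ultimately show ?thesis
      using last y by (intro exI[of _ "max k m"]) simp
  qed
qed auto

theorem proposition3p4:
  fixes f :: "'a::metric_space \<Rightarrow> real"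
  assumes ultra: "\<And>x y z::'a. dist x y \<le> max (dist x z) (dist y z)"
    and so: "slowly_oscillating f"
  shows "glacially_oscillating f"
  unfolding glacially_oscillating_def
proof (intro allI impI)
  fix \<epsilon> :: real assume "\<epsilon> > 0"
  fix p :: 'a
  have "\<exists>B. \<forall>x y. dist p x > B \<longrightarrow> dist p y > B \<longrightarrow> dist x y < real n + 1 \<longrightarrow> \<bar>f x - f y\<bar> < \<epsilon>" for n
    by (rule slowly_oscillating_outside_ball[OF so _ \<open>\<epsilon> > 0\<close>]) simp
  then obtain B where B: "\<And>n x y. dist p x > B n \<Longrightarrow> dist p y > B n \<Longrightarrow> dist x y < real n + 1 \<Longrightarrow> \<bar>f x - f y\<bar> < \<epsilon>"
    by metis
  define R where "R n = max (real n) (B n)" for n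
  have R: "real n \<le> R n" for n
    by (simp add: R_def)
  have "\<bar>f (hd xs) - f (last xs)\<bar> < \<epsilon>" if chain: "S_chain (\<lambda>n. (cball p (R n), n)) xs" for xs
  proof (cases "tl xs = []")
    case True
    with chain have "hd xs = last xs"
      by (cases xs) (auto simp: S_chain_def)
    with \<open>\<epsilon> > 0\<close> show ?thesis by simp
  next
    case False
    then obtain m where "dist (hd xs) (last xs) \<le> real m" "R m < dist p (hd xs)" "dist p (last xs) = dist p (hd xs)"
      using ultrametric_S_chain_cball_ends[OF ultra R chain] by blast
    then show ?thesis
      by (intro B[of m]) (auto simp: R_def)
  qed
  then show "\<exists>S. glacial_scale S \<and> (\<forall>xs. S_chain S xs \<longrightarrow> \<bar>f (hd xs) - f (last xs)\<bar> < \<epsilon>)"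
    using glacial_scale_cball[OF R] by blast
qed

end
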